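(* Let $(S,* )$ be an LD-system. Then $(\widehat S, \vec{*}, \frown)$ is an ALD-system.
   Context: An LD-system is a set with a binary operation $*$ satisfying $x*(y*z)=(x*y)*(x*z)$ (LD). An ALD-system is a set with two binary operations $*,\circ$ satisfying (LD), $x*(y*z)=(x\circ y)*z$ and $x*(y\circ z)=(x*y)\circ(x*z)$. $\widehat S$ is the set of all finite nonempty sequences of elements of $S$; for $\vec s=(s_1,\dots,s_p)$ and $\vec t=(t_1,\dots,t_q)$, $\vec s\frown\vec t=(s_1,\dots,s_p,t_1,\dots,t_q)$ is concatenation and $\vec s\mathbin{\vec{*}}\vec t=(s_1*\cdots*s_p*t_1,\dots,s_1*\cdots*s_p*t_q)$, where missing parentheses are added on the right ($a*b*c$ means $a*(b*c)$). *)

theory Defs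
  imports Main
begin

definition LD_system :: "'a set \<Rightarrow> ('a \<Rightarrow> 'a \<Rightarrow> 'a) \<Rightarrow> bool" where
  "LD_system S op \<longleftrightarrow>
     (\<forall>x\<in>S. \<forall>y\<in>S. op x y \<in> S) \<and>
     (\<forall>x\<in>S. \<forall>y\<in>S. \<forall>z\<in>S. op x (op y z) = op (op x y) (op x z))"

definition ALD_system :: "'a set \<Rightarrow> ('a \<Rightarrow> 'a \<Rightarrow> 'a) \<Rightarrow> ('a \<Rightarrow> 'a \<Rightarrow> 'a) \<Rightarrow> bool" where
  "ALD_system A st ci \<longleftrightarrow>
     (\<forall>x\<in>A. \<forall>y\<in>A. st x y \<in> A) \<and>
     (\<forall>x\<in>A. \<forall>y\<in>A. ci x y \<in> A) \<and>
     (\<forall>x\<in>A. \<forall>y\<in>A. \<forall>z\<in>A. st x (st y z) = st (st x y) (st x z)) \<and>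
     (\<forall>x\<in>A. \<forall>y\<in>A. \<forall>z\<in>A. st x (st y z) = st (ci x y) z) \<and>
     (\<forall>x\<in>A. \<forall>y\<in>A. \<forall>z\<in>A. st x (ci y z) = ci (st x y) (st x z))"

definition seqs :: "'a set \<Rightarrow> 'a list set" where
  "seqs S = {xs. xs \<noteq> [] \<and> set xs \<subseteq> S}"

definition iter_op :: "('a \<Rightarrow> 'a \<Rightarrow> 'a) \<Rightarrow> 'a list \<Rightarrow> 'a \<Rightarrow> 'a" where
  "iter_op op s t = foldr op s t"

definition vec_op :: "('a \<Rightarrow> 'a \<Rightarrow> 'a) \<Rightarrow> 'a list \<Rightarrow> 'a list \<Rightarrow> 'a list" where
  "vec_op op s t = map (iter_op op s) t"

end

theory Submission
  imports Defs
begin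

text \<open>The left translation \<open>t \<mapsto> s\<^sub>1 * (\<dots> * (s\<^sub>p * t))\<close> by a sequence \<open>s\<close> is a composite of
  left translations by elements, each of which is an endomorphism of \<open>(S, *)\<close> by (LD); hence it
  is an endomorphism itself, and it maps an iterated product \<open>u\<^sub>1 * (\<dots> * (u\<^sub>q * t))\<close> to the
  iterated product of the translated factors.  Since \<open>vec_op\<close> acts componentwise, this is
  exactly (LD) for sequences.  The other two laws need no hypothesis on \<open>*\<close>: translation by a
  concatenation is the composite of the translations, and a componentwise action distributes
  over concatenation.\<close>

lemma iter_op_closed:
  assumes "\<forall>x\<in>S. \<forall>y\<in>S. op x y \<in> S" and "set s \<subseteq> S" and "t \<in> S"
  shows "iter_op op s t \<in> S"
  using assms(2) unfolding iter_op_def by (induction s) (use assms in auto)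

lemma iter_op_distrib:
  assumes "LD_system S op" and "set s \<subseteq> S" and "y \<in> S" and "z \<in> S"
  shows "iter_op op s (op y z) = op (iter_op op s y) (iter_op op s z)"
proof -
  have closed: "\<forall>x\<in>S. \<forall>y\<in>S. op x y \<in> S"
    and ld: "\<forall>x\<in>S. \<forall>y\<in>S. \<forall>z\<in>S. op x (op y z) = op (op x y) (op x z)"
    using assms(1) unfolding LD_system_def by blast+
  from assms(2) show ?thesis
  proof (induction s)
    case Nil
    then show ?case by (simp add: iter_op_def)
  next
    case (Cons a s)
    have "a \<in> S" "iter_op op s y \<in> S" "iter_op op s z \<in> S"
      using Cons.prems assms(3,4) iter_op_closed[OF closed] by auto
    then show ?case
      using Cons ld by (simp add: iter_op_def)
  qed
qed

lemma iter_op_iter_op: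
  assumes "LD_system S op" and "set s \<subseteq> S" and "set u \<subseteq> S" and "t \<in> S"
  shows "iter_op op s (iter_op op u t) = iter_op op (vec_op op s u) (iter_op op s t)"
  using assms(3)
proof (induction u)
  case Nil
  then show ?case by (simp add: iter_op_def vec_op_def)
next
  case (Cons b u)
  have "iter_op op u t \<in> S"
    using assms(1,4) Cons.prems iter_op_closed unfolding LD_system_def by auto
  then have "iter_op op s (iter_op op (b # u) t)
      = op (iter_op op s b) (iter_op op s (iter_op op u t))"
    using iter_op_distrib[OF assms(1,2)] Cons.prems by (simp add: iter_op_def)
  then show ?case
    using Cons by (simp add: iter_op_def vec_op_def)
qed

lemma vec_op_closed:
  assumes "\<forall>x\<in>S. \<forall>y\<in>S. op x y \<in> S" and "s \<in> seqs S" and "t \<in> seqs S"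
  shows "vec_op op s t \<in> seqs S"
  using assms iter_op_closed[OF assms(1)] by (auto simp: seqs_def vec_op_def)

lemma append_seqs: "s \<in> seqs S \<Longrightarrow> t \<in> seqs S \<Longrightarrow> s @ t \<in> seqs S"
  by (simp add: seqs_def)

lemma vec_op_self_distrib:
  assumes "LD_system S op" and "set s \<subseteq> S" and "set u \<subseteq> S" and "set t \<subseteq> S"
  shows "vec_op op s (vec_op op u t) = vec_op op (vec_op op s u) (vec_op op s t)"
  using assms iter_op_iter_op[OF assms(1-3)] by (auto simp: vec_op_def)

lemma LD_system_seqs:
  assumes "LD_system S op"
  shows "LD_system (seqs S) (vec_op op)"
proof -
  have "\<forall>x\<in>S. \<forall>y\<in>S. op x y \<in> S"
    using assms unfolding LD_system_def by blast
  then have "\<forall>s\<in>seqs S. \<forall>t\<in>seqs S. vec_op op s t \<in> seqs S"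
    using vec_op_closed by blast
  moreover have "\<forall>s\<in>seqs S. \<forall>u\<in>seqs S. \<forall>t\<in>seqs S.
      vec_op op s (vec_op op u t) = vec_op op (vec_op op s u) (vec_op op s t)"
    using vec_op_self_distrib[OF assms] by (simp add: seqs_def)
  ultimately show ?thesis
    unfolding LD_system_def by blast
qed

lemma iter_op_append: "iter_op op (s @ u) t = iter_op op s (iter_op op u t)"
  by (simp add: iter_op_def)

lemma vec_op_append_left: "vec_op op (s @ u) t = vec_op op s (vec_op op u t)"
  by (simp add: vec_op_def iter_op_append)

lemma vec_op_append_right: "vec_op op s (u @ t) = vec_op op s u @ vec_op op s t"
  by (simp add: vec_op_def)

theorem lemma1p7:
  fixes S :: "'a set" and op :: "'a \<Rightarrow> 'a \<Rightarrow> 'a"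
  assumes "LD_system S op"
  shows "ALD_system (seqs S) (vec_op op) (\<lambda>s t. s @ t)"
  using LD_system_seqs[OF assms] append_seqs
  unfolding ALD_system_def LD_system_def
  by (simp only: vec_op_append_left vec_op_append_right refl ball_simps simp_thms) blast

end
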